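(* Let $G$ be a finite non-abelian group satisfying condition (Con). Then the algebraic connectivity of $\mathcal C_G$ (the second smallest eigenvalue, counted with multiplicity, of its Laplacian matrix) equals $|Z(G)|$.
   Context: For a finite group $G$, the commuting graph $\mathcal C_G$ is the simple undirected graph with vertex set $G$ in which distinct $u,v\in G$ are adjacent iff $uv=vu$. The Laplacian matrix of a simple graph is $L=D-A$ ($A$ adjacency matrix, $D$ diagonal degree matrix). $Z(G)$ is the center of $G$ and $C(v)=\{w\in G: wv=vw\}$ the centralizer of $v$. Condition (Con): for all $u,v\in G\setminus Z(G)$, either $C(u)=C(v)$ or $C(u)\cap C(v)=Z(G)$. *)

theory Defs
  imports "HOL-Algebra.Group" "Jordan_Normal_Form.Char_Poly"
begin

definition grp_center :: "('a, 'b) monoid_scheme \<Rightarrow> 'a set" where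
  "grp_center G = {z \<in> carrier G. \<forall>w \<in> carrier G. z \<otimes>\<^bsub>G\<^esub> w = w \<otimes>\<^bsub>G\<^esub> z}"

definition grp_centralizer :: "('a, 'b) monoid_scheme \<Rightarrow> 'a \<Rightarrow> 'a set" where
  "grp_centralizer G v = {w \<in> carrier G. w \<otimes>\<^bsub>G\<^esub> v = v \<otimes>\<^bsub>G\<^esub> w}"

definition con_condition :: "('a, 'b) monoid_scheme \<Rightarrow> bool" where
  "con_condition G \<longleftrightarrow>
     (\<forall>u \<in> carrier G - grp_center G. \<forall>v \<in> carrier G - grp_center G.
        grp_centralizer G u = grp_centralizer G v \<or>
        grp_centralizer G u \<inter> grp_centralizer G v = grp_center G)"

definition comm_adj :: "('a, 'b) monoid_scheme \<Rightarrow> 'a \<Rightarrow> 'a \<Rightarrow> bool" where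
  "comm_adj G u v \<longleftrightarrow> u \<in> carrier G \<and> v \<in> carrier G \<and> u \<noteq> v \<and>
     u \<otimes>\<^bsub>G\<^esub> v = v \<otimes>\<^bsub>G\<^esub> u"

(* Laplacian L = D - A of the commuting graph, with vertices ordered by an
   enumeration f : {0..<|G|} -> carrier G *)
definition comm_laplacian :: "('a, 'b) monoid_scheme \<Rightarrow> (nat \<Rightarrow> 'a) \<Rightarrow> real mat" where
  "comm_laplacian G f = mat (card (carrier G)) (card (carrier G))
     (\<lambda>(i, j). (if i = j then real (card {w. comm_adj G (f i) w}) else 0)
              - (if comm_adj G (f i) (f j) then 1 else 0))"

definition eigenvalues_sorted :: "real mat \<Rightarrow> real list" where
  "eigenvalues_sorted A = sorted_list_of_multiset (proots (char_poly A))"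

definition algebraic_connectivity :: "real mat \<Rightarrow> real" where
  "algebraic_connectivity A = eigenvalues_sorted A ! 1"

end

theory Submission
  imports Defs
begin

(* On functions v : G -> R the Laplacian of the commuting graph acts as
   (L v)(x) = |C(x)| v(x) - sum_{y in C(x)} v(y).  Under (Con) the sets C(x) - Z(G), x non-central,
   are classes on which C is constant, and solving L v = mu v class by class shows that for
   mu < |Z(G)| every eigenfunction is constant.  Hence 0 is the only eigenvalue below |Z(G)| and its
   eigenvectors are the constants, while a suitable difference of two class indicators is an
   eigenfunction for |Z(G)|.  As L has zero row sums and the all-ones vector is not in its range
   (the column sums vanish too), 0 is a simple root of the characteristic polynomial, so the
   increasing list of eigenvalues starts with 0, |Z(G)|. *)

section \<open>Characteristic polynomial of a matrix with zero row sums\<close>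

definition col0_shear :: "nat \<Rightarrow> 'a :: comm_ring_1 \<Rightarrow> 'a mat" where
  "col0_shear n c = mat n n (\<lambda>(i, j). if i = j then 1 else if j = 0 then c else 0)"

lemma col0_shear_carrier [simp]: "col0_shear n c \<in> carrier_mat n n"
  unfolding col0_shear_def by simp

lemma col0_shear_mult_left:
  assumes A: "A \<in> carrier_mat n k" and i: "i < n" and j: "j < k"
  shows "(col0_shear n c * A) $$ (i, j) = A $$ (i, j) + (if i = 0 then 0 else c * A $$ (0, j))"
proof -
  have "(col0_shear n c * A) $$ (i, j) = (\<Sum>l<n. col0_shear n c $$ (i, l) * A $$ (l, j))"
    using A i j by (simp add: scalar_prod_def atLeast0LessThan col0_shear_def)
  also have "\<dots> = (\<Sum>l<n. (if l = i then A $$ (i, j) else 0) + (if i \<noteq> 0 \<and> l = 0 then c * A $$ (0, j) else 0))"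
    using i by (auto simp: col0_shear_def intro!: sum.cong)
  also have "\<dots> = A $$ (i, j) + (if i = 0 then 0 else c * A $$ (0, j))"
    using i by (simp add: sum.distrib)
  finally show ?thesis .
qed

lemma col0_shear_mult_right:
  assumes A: "A \<in> carrier_mat k n" and i: "i < k" and j: "j < n"
  shows "(A * col0_shear n c) $$ (i, j) = A $$ (i, j) + (if j = 0 then c * (\<Sum>l\<in>{1..<n}. A $$ (i, l)) else 0)"
proof -
  have "(A * col0_shear n c) $$ (i, j) = (\<Sum>l<n. A $$ (i, l) * col0_shear n c $$ (l, j))"
    using A i j by (simp add: scalar_prod_def atLeast0LessThan col0_shear_def)
  also have "\<dots> = (\<Sum>l<n. (if l = j then A $$ (i, j) else 0) + (if j = 0 \<and> l \<in> {1..<n} then c * A $$ (i, l) else 0))"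
    using j by (intro sum.cong refl) (auto simp: col0_shear_def)
  also have "\<dots> = A $$ (i, j) + (if j = 0 then c * (\<Sum>l\<in>{1..<n}. A $$ (i, l)) else 0)"
  proof (cases "j = 0")
    case True
    have "(\<Sum>l<n. if l \<in> {1..<n} then c * A $$ (i, l) else 0) = (\<Sum>l\<in>{..<n} \<inter> {1..<n}. c * A $$ (i, l))"
      by (rule sum.inter_restrict[symmetric]) simp
    moreover have "{..<n} \<inter> {1..<n} = {1..<n}" by auto
    ultimately show ?thesis using j True by (simp only: sum.distrib sum_distrib_left) simp
  qed (use j in simp)
  finally show ?thesis .
qed

lemma col0_shear_mult: "col0_shear n a * col0_shear n b = col0_shear n (a + b)"
proof (rule eq_matI)
  fix i j assume "i < dim_row (col0_shear n (a + b))" "j < dim_col (col0_shear n (a + b))"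
  then have "i < n" "j < n" by (simp_all add: col0_shear_def)
  then show "(col0_shear n a * col0_shear n b) $$ (i, j) = col0_shear n (a + b) $$ (i, j)"
    by (simp add: col0_shear_mult_left[of _ n n]) (simp add: col0_shear_def)
qed (simp_all add: col0_shear_def)

lemma col0_shear_0: "col0_shear n 0 = 1\<^sub>m n"
  by (rule eq_matI) (simp_all add: col0_shear_def)

definition row0_reduced_mat :: "nat \<Rightarrow> 'a :: comm_ring_1 mat \<Rightarrow> 'a mat" where
  "row0_reduced_mat m L = mat m m (\<lambda>(k, l). L $$ (Suc k, Suc l) - L $$ (0, Suc l))"

lemma char_poly_zero_row_sums:
  fixes L :: "'a :: idom mat"
  assumes L: "L \<in> carrier_mat (Suc m) (Suc m)"
    and row_sums: "\<And>i. i < Suc m \<Longrightarrow> (\<Sum>j<Suc m. L $$ (i, j)) = 0"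
  shows "char_poly L = monom 1 1 * char_poly (row0_reduced_mat m L)"
proof -
  define n where "n = Suc m"
  let ?P = "col0_shear n (1 :: 'a)" and ?Q = "col0_shear n (-1 :: 'a)"
  (* ?Q subtracts row 0 from the other rows; ?P then adds all other columns to column 0,
     which therefore holds the (zero) row sums of ?Q * L. *)
  define M where "M = ?Q * L * ?P"
  have L: "L \<in> carrier_mat n n" and PQ: "?P \<in> carrier_mat n n" "?Q \<in> carrier_mat n n"
    using L by (simp_all add: n_def)
  have QL_carrier: "?Q * L \<in> carrier_mat n n" using mult_carrier_mat[OF PQ(2) L] .
  have M: "M \<in> carrier_mat n n" using mult_carrier_mat[OF QL_carrier PQ(1)] unfolding M_def .
  have inverse: "?P * ?Q = 1\<^sub>m n" "?Q * ?P = 1\<^sub>m n"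
    by (simp_all add: col0_shear_mult col0_shear_0)
  have "?P * M = ?P * (?Q * L) * ?P"
    unfolding M_def using assoc_mult_mat[OF PQ(1) QL_carrier PQ(1)] by simp
  also have "\<dots> = L * ?P"
    using assoc_mult_mat[OF PQ L, symmetric] L by (simp add: inverse)
  finally have "?P * M * ?Q = L * ?P * ?Q" by simp
  then have L_eq: "L = ?P * M * ?Q"
    using assoc_mult_mat[OF L PQ] L by (simp add: inverse)
  have "similar_mat L M"
    using similar_matI[where n = n, OF _ inverse L_eq] L M PQ by simp
  then have "char_poly L = char_poly M" by (rule char_poly_similar)
  have QL: "(?Q * L) $$ (i, j) = L $$ (i, j) - (if i = 0 then 0 else L $$ (0, j))"
    if "i < n" "j < n" for i j
    using col0_shear_mult_left[OF L that] by simp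
  have M_entry: "M $$ (i, j) = (if j = 0 then 0 else (?Q * L) $$ (i, j))"
    if ij: "i < n" "j < n" for i j
  proof -
    have "(\<Sum>l<n. (?Q * L) $$ (i, l)) = (\<Sum>l<n. L $$ (i, l)) - (if i = 0 then 0 else \<Sum>l<n. L $$ (0, l))"
      using ij by (simp add: QL sum_subtractf)
    also have "\<dots> = 0" using ij row_sums by (simp add: n_def)
    finally have "(\<Sum>l<n. (?Q * L) $$ (i, l)) = 0" .
    then have "(?Q * L) $$ (i, 0) + (\<Sum>l\<in>{1..<n}. (?Q * L) $$ (i, l)) = 0"
      using sum.atLeast_Suc_lessThan[of 0 n "\<lambda>l. (?Q * L) $$ (i, l)"]
      by (simp add: lessThan_atLeast0 n_def del: sum.op_ivl_Suc)
    then show ?thesis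
      unfolding M_def using col0_shear_mult_right[OF QL_carrier ij, of 1] by simp
  qed
  have "char_poly M = monom 1 1 * char_poly (mat_delete M 0 0)"
    by (rule char_poly_0_column[OF _ M]) (simp_all add: M_entry n_def)
  moreover have "mat_delete M 0 0 = row0_reduced_mat m L"
  proof -
    have "n - 1 = m" "\<And>k. Suc k < n \<longleftrightarrow> k < m" by (simp_all add: n_def)
    then show ?thesis using M by (intro eq_matI) (auto simp: row0_reduced_mat_def mat_delete_def M_entry QL)
  qed
  ultimately show ?thesis using \<open>char_poly L = char_poly M\<close> by simp
qed

lemma smult_vec_vec: "c \<cdot>\<^sub>v vec n g = vec n (\<lambda>i. c * g i)"
  by (rule eq_vecI) simp_all

lemma row0_reduced_mat_not_eigenvalue_0:
  fixes L :: "'a :: field mat"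
  assumes L: "L \<in> carrier_mat (Suc m) (Suc m)"
    and kernel: "\<And>w. w \<in> carrier_vec (Suc m) \<Longrightarrow> L *\<^sub>v w = 0\<^sub>v (Suc m) \<Longrightarrow> \<exists>c. w = c \<cdot>\<^sub>v vec (Suc m) (\<lambda>_. 1)"
    and ones_not_in_range: "\<And>w. w \<in> carrier_vec (Suc m) \<Longrightarrow> L *\<^sub>v w \<noteq> vec (Suc m) (\<lambda>_. 1)"
  shows "\<not> eigenvalue (row0_reduced_mat m L) 0"
proof
  let ?n = "Suc m" and ?B = "row0_reduced_mat m L"
  have B: "?B \<in> carrier_mat m m" by (simp add: row0_reduced_mat_def)
  assume "eigenvalue ?B 0"
  then obtain v where v: "v \<in> carrier_vec m" "v \<noteq> 0\<^sub>v m" "?B *\<^sub>v v = 0 \<cdot>\<^sub>v v"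
    using B unfolding eigenvalue_def eigenvector_def by auto
  define w where "w = vec ?n (\<lambda>i. if i = 0 then 0 else v $ (i - 1))"
  have w: "w \<in> carrier_vec ?n" unfolding w_def by simp
  have Lw: "(L *\<^sub>v w) $ i = (\<Sum>l<m. L $$ (i, Suc l) * v $ l)" if "i < ?n" for i
    using L that
    by (simp add: scalar_prod_def w_def atLeast0LessThan sum.lessThan_Suc_shift del: sum.lessThan_Suc)
  have "(L *\<^sub>v w) $ Suc k = (L *\<^sub>v w) $ 0" if k: "k < m" for k
  proof -
    have "(L *\<^sub>v w) $ Suc k - (L *\<^sub>v w) $ 0 = (?B *\<^sub>v v) $ k"
      using k v(1) B
      by (simp add: Lw scalar_prod_def row0_reduced_mat_def lessThan_atLeast0 sum_subtractf left_diff_distrib)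
    then show ?thesis using arg_cong[OF v(3), of "\<lambda>u. u $ k"] v(1) k by simp
  qed
  then have Lw_const: "L *\<^sub>v w = (L *\<^sub>v w) $ 0 \<cdot>\<^sub>v vec ?n (\<lambda>_. 1)"
    using L by (intro eq_vecI) (auto simp: less_Suc_eq_0_disj)
  define c where "c = (L *\<^sub>v w) $ 0"
  have "c = 0"
  proof (rule ccontr)
    assume "c \<noteq> 0"
    then have "L *\<^sub>v (inverse c \<cdot>\<^sub>v w) = vec ?n (\<lambda>_. 1)"
      using mult_mat_vec[OF L w] Lw_const by (simp add: c_def[symmetric] smult_smult_assoc)
    then show False using ones_not_in_range w by simp
  qed
  then have "L *\<^sub>v w = 0\<^sub>v ?n" using Lw_const unfolding c_def by auto
  then obtain c where "w = c \<cdot>\<^sub>v vec ?n (\<lambda>_. 1)" using kernel w by blast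
  moreover have "w $ 0 = 0" by (simp add: w_def)
  ultimately have "w = 0\<^sub>v ?n" by auto
  have "v = 0\<^sub>v m"
  proof (intro eq_vecI)
    fix l assume "l < dim_vec (0\<^sub>v m :: 'a vec)"
    then show "v $ l = 0\<^sub>v m $ l"
      using arg_cong[OF \<open>w = 0\<^sub>v ?n\<close>, of "\<lambda>u. u $ Suc l"] by (simp add: w_def)
  qed (use v(1) in simp)
  with v(2) show False ..
qed

lemma order_zero_char_poly_eq_1:
  fixes L :: "'a :: field mat"
  assumes L: "L \<in> carrier_mat n n" and n: "0 < n"
    and ones_in_kernel: "L *\<^sub>v vec n (\<lambda>_. 1) = 0\<^sub>v n"
    and kernel: "\<And>w. w \<in> carrier_vec n \<Longrightarrow> L *\<^sub>v w = 0\<^sub>v n \<Longrightarrow> \<exists>c. w = c \<cdot>\<^sub>v vec n (\<lambda>_. 1)"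
    and ones_not_in_range: "\<And>w. w \<in> carrier_vec n \<Longrightarrow> L *\<^sub>v w \<noteq> vec n (\<lambda>_. 1)"
  shows "order 0 (char_poly L) = 1"
proof -
  obtain m where nm: "n = Suc m" using n gr0_implies_Suc by blast
  have B: "row0_reduced_mat m L \<in> carrier_mat m m" by (simp add: row0_reduced_mat_def)
  have "(\<Sum>j<n. L $$ (i, j)) = 0" if "i < n" for i
    using arg_cong[OF ones_in_kernel, of "\<lambda>u. u $ i"] L that
    by (simp add: scalar_prod_def lessThan_atLeast0)
  then have char_poly_L: "char_poly L = monom 1 1 * char_poly (row0_reduced_mat m L)"
    using char_poly_zero_row_sums[of L m] L nm by simp
  have "\<not> eigenvalue (row0_reduced_mat m L) 0"
    using row0_reduced_mat_not_eigenvalue_0[of L m] L kernel ones_not_in_range unfolding nm by blast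
  then have "poly (char_poly (row0_reduced_mat m L)) 0 \<noteq> 0"
    using eigenvalue_root_char_poly[OF B] by simp
  moreover have "char_poly L \<noteq> 0" using degree_monic_char_poly[OF L] by auto
  ultimately show ?thesis
    unfolding char_poly_L by (subst order_mult) (auto simp: order_0I)
qed

section \<open>The commuting Laplacian on functions\<close>

(* x commutes with itself, so the row of the commuting-graph Laplacian at x acts on v as
   (|C(x)| - 1) v(x) - sum over C(x) - {x} of v, which is this expression. *)
definition comm_laplace_op :: "('a, 'b) monoid_scheme \<Rightarrow> ('a \<Rightarrow> real) \<Rightarrow> 'a \<Rightarrow> real" where
  "comm_laplace_op G v x = real (card (grp_centralizer G x)) * v x - (\<Sum>y\<in>grp_centralizer G x. v y)"

lemma comm_laplace_op_const [simp]: "comm_laplace_op G (\<lambda>_. c) x = 0"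
  by (simp add: comm_laplace_op_def)

lemma comm_laplace_op_linear:
  "comm_laplace_op G (\<lambda>x. a * v x + b * w x) y = a * comm_laplace_op G v y + b * comm_laplace_op G w y"
  by (simp add: comm_laplace_op_def sum.distrib sum_distrib_left algebra_simps)

locale finite_group = group G for G (structure) +
  assumes finite_carrier: "finite (carrier G)"
begin

abbreviation Z where "Z \<equiv> grp_center G"
abbreviation C where "C \<equiv> grp_centralizer G"

lemma centralizer_subset: "C x \<subseteq> carrier G"
  by (auto simp: grp_centralizer_def)

lemma finite_centralizer [simp]: "finite (C x)"
  using finite_subset[OF centralizer_subset finite_carrier] .

lemma center_subset: "Z \<subseteq> carrier G"
  by (auto simp: grp_center_def)

lemma finite_center [simp]: "finite Z"
  using finite_subset[OF center_subset finite_carrier] .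

lemma center_subset_centralizer: "x \<in> carrier G \<Longrightarrow> Z \<subseteq> C x"
  by (auto simp: grp_center_def grp_centralizer_def)

lemma mem_centralizer_self: "x \<in> carrier G \<Longrightarrow> x \<in> C x"
  by (simp add: grp_centralizer_def)

lemma centralizer_of_center: "z \<in> Z \<Longrightarrow> C z = carrier G"
  by (auto simp: grp_center_def grp_centralizer_def)

lemma card_center_pos: "0 < card Z"
proof -
  have "\<one> \<in> Z" by (simp add: grp_center_def)
  then show ?thesis using finite_center card_gt_0_iff by blast
qed

lemma card_centralizer_minus_center:
  "x \<in> carrier G \<Longrightarrow> real (card (C x - Z)) = real (card (C x)) - real (card Z)"
  using center_subset_centralizer card_mono[OF finite_centralizer center_subset_centralizer]
  by (simp add: card_Diff_subset of_nat_diff)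

lemma eigenfunction_center_eq:
  assumes "comm_laplace_op G v z = \<mu> * v z" and "z \<in> Z"
  shows "(real (card (carrier G)) - \<mu>) * v z = (\<Sum>x\<in>carrier G. v x)"
  using assms by (simp add: comm_laplace_op_def centralizer_of_center algebra_simps)

lemma sum_comm_laplace_op: "(\<Sum>x\<in>carrier G. comm_laplace_op G v x) = 0"
proof -
  have "(\<Sum>x\<in>carrier G. \<Sum>y\<in>C x. v y) = (\<Sum>y\<in>carrier G. \<Sum>x\<in>C y. v y)"
    using sum.swap_restrict[OF finite_carrier finite_carrier, of "\<lambda>x y. v y" "\<lambda>x y. y \<otimes> x = x \<otimes> y"]
    unfolding grp_centralizer_def by (simp add: eq_commute)
  then show ?thesis by (simp add: comm_laplace_op_def sum_subtractf)
qed

end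

locale con_group = finite_group +
  assumes con: "con_condition G"
begin

lemma centralizer_eq_of_noncentral:
  assumes x: "x \<in> carrier G - Z" and y: "y \<in> C x - Z"
  shows "C y = C x"
proof -
  have "y \<in> carrier G" using y centralizer_subset by auto
  then have "C x = C y \<or> C x \<inter> C y = Z" using con x y unfolding con_condition_def by blast
  moreover have "y \<in> C x \<inter> C y" using y \<open>y \<in> carrier G\<close> mem_centralizer_self by auto
  ultimately show ?thesis using y by auto
qed

lemma eigenfunction_class_eq:
  assumes "comm_laplace_op G v y = \<mu> * v y" and "x \<in> carrier G - Z" and "y \<in> C x - Z"
  shows "(real (card (C x)) - \<mu>) * v y = (\<Sum>y\<in>C x. v y)"
  using assms centralizer_eq_of_noncentral[OF assms(2,3)] by (simp add: comm_laplace_op_def algebra_simps)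

lemma eigenfunction_below_center_constant:
  assumes eigen: "\<And>x. x \<in> carrier G \<Longrightarrow> comm_laplace_op G v x = \<mu> * v x"
    and below: "\<mu> < real (card Z)"
  shows "\<exists>c. \<forall>x\<in>carrier G. v x = c"
proof -
  define s where "s = (\<Sum>x\<in>carrier G. v x)"
  define a where "a = s / (real (card (carrier G)) - \<mu>)"
  have "\<mu> * s = 0"
    using sum_comm_laplace_op[of v] eigen by (simp add: s_def sum_distrib_left)
  then have \<mu>_a: "\<mu> * a = 0" by (simp add: a_def)
  have "real (card Z) \<le> real (card (carrier G))"
    using card_mono[OF finite_carrier center_subset] by simp
  then have n_gt: "\<mu> < real (card (carrier G))" using below by linarith
  have central: "v z = a" if z: "z \<in> Z" for z
    using eigenfunction_center_eq[OF eigen[of z] z] z center_subset n_gt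
    by (auto simp: a_def s_def field_simps)
  have noncentral: "v x = a" if x: "x \<in> carrier G - Z" for x
  proof -
    define c where "c = real (card (C x))"
    define t where "t = (\<Sum>y\<in>C x. v y) / (c - \<mu>)"
    have "real (card Z) \<le> c"
      unfolding c_def using card_mono[OF finite_centralizer center_subset_centralizer] x by simp
    then have c_gt: "\<mu> < c" using below by linarith
    have on_class: "v y = t" if y: "y \<in> C x - Z" for y
      using eigenfunction_class_eq[OF eigen x y] y centralizer_subset c_gt
      by (auto simp: t_def c_def field_simps)
    have x_carrier: "x \<in> carrier G" using x by simp
    have "(c - \<mu>) * t = (\<Sum>y\<in>C x. v y)" using c_gt by (simp add: t_def)
    also have "\<dots> = (\<Sum>y\<in>C x - Z. v y) + (\<Sum>y\<in>Z. v y)"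
      by (rule sum.subset_diff[OF center_subset_centralizer[OF x_carrier] finite_centralizer])
    also have "(\<Sum>y\<in>C x - Z. v y) = (c - real (card Z)) * t"
      using on_class card_centralizer_minus_center[OF x_carrier] by (simp add: c_def)
    also have "(\<Sum>y\<in>Z. v y) = real (card Z) * a"
      using central by simp
    finally have "(c - \<mu>) * t = (c - real (card Z)) * t + real (card Z) * a" .
    then have "(real (card Z) - \<mu>) * t = (real (card Z) - \<mu>) * a"
      using \<mu>_a by (simp add: algebra_simps)
    then have "t = a" using below by simp
    moreover have "x \<in> C x - Z" using x mem_centralizer_self by auto
    ultimately show ?thesis using on_class by simp
  qed
  show ?thesis using central noncentral by blast
qed

lemma comm_laplace_op_class_indicator:
  assumes a: "a \<in> carrier G - Z" and x: "x \<in> carrier G"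
  shows "comm_laplace_op G (\<lambda>y. of_bool (y \<in> C a - Z)) x
    = real (card Z) * of_bool (x \<in> C a - Z) - real (card (C a - Z)) * of_bool (x \<in> Z)"
proof -
  have a_carrier: "a \<in> carrier G" using a by simp
  have sum_eq: "(\<Sum>y\<in>C x. of_bool (y \<in> C a - Z)) = real (card (C x \<inter> (C a - Z)))"
    using sum.inter_restrict[OF finite_centralizer, of "\<lambda>_. 1 :: real" x "C a - Z"]
    by (simp add: of_bool_def)
  consider "x \<in> Z" | "x \<in> C a - Z" | "x \<notin> Z" "x \<notin> C a"
    by blast
  then show ?thesis
  proof cases
    case 1
    then have "C x \<inter> (C a - Z) = C a - Z"
      using centralizer_of_center centralizer_subset by auto
    then show ?thesis using 1 unfolding comm_laplace_op_def sum_eq by simp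
  next
    case 2
    then have "C x = C a" using centralizer_eq_of_noncentral a by blast
    then show ?thesis
      using 2 card_centralizer_minus_center[OF a_carrier]
      unfolding comm_laplace_op_def sum_eq by (simp add: Int_absorb1)
  next
    case 3
    have "C x \<inter> (C a - Z) = {}"
    proof (rule ccontr)
      assume "C x \<inter> (C a - Z) \<noteq> {}"
      then obtain y where y: "y \<in> C x - Z" "y \<in> C a - Z" by auto
      have "C y = C x" using centralizer_eq_of_noncentral[OF _ y(1)] x 3 by blast
      moreover have "C y = C a" using centralizer_eq_of_noncentral[OF a y(2)] .
      ultimately show False using 3 x mem_centralizer_self by auto
    qed
    then show ?thesis using 3 unfolding comm_laplace_op_def sum_eq by simp
  qed
qed

lemma center_eigenfunction_exists:
  assumes "\<not> comm_group G"
  obtains v a where "\<And>x. x \<in> carrier G \<Longrightarrow> comm_laplace_op G v x = real (card Z) * v x"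
    and "a \<in> carrier G" "v a \<noteq> 0"
proof -
  obtain a b where ab: "a \<in> carrier G" "b \<in> carrier G" "a \<otimes> b \<noteq> b \<otimes> a"
    using assms group_comm_groupI by blast
  then have noncentral: "a \<in> carrier G - Z" "b \<in> carrier G - Z" and "a \<notin> C b"
    by (auto simp: grp_center_def grp_centralizer_def) metis
  define ind where "ind u y = (of_bool (y \<in> C u - Z) :: real)" for u y
  define v where "v y = real (card (C b - Z)) * ind a y + - real (card (C a - Z)) * ind b y" for y
  have "comm_laplace_op G v x = real (card Z) * v x" if x: "x \<in> carrier G" for x
  proof -
    have "comm_laplace_op G v x
        = real (card (C b - Z)) * comm_laplace_op G (ind a) x + - real (card (C a - Z)) * comm_laplace_op G (ind b) x"
      unfolding v_def[abs_def] by (rule comm_laplace_op_linear)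
    also have "\<dots> = real (card (C b - Z)) * (real (card Z) * ind a x - real (card (C a - Z)) * of_bool (x \<in> Z))
        + - real (card (C a - Z)) * (real (card Z) * ind b x - real (card (C b - Z)) * of_bool (x \<in> Z))"
      unfolding ind_def[abs_def]
      by (simp only: comm_laplace_op_class_indicator[OF noncentral(1) x] comm_laplace_op_class_indicator[OF noncentral(2) x])
    also have "\<dots> = real (card Z) * v x" by (simp add: v_def algebra_simps)
    finally show ?thesis .
  qed
  moreover have "v a \<noteq> 0"
  proof -
    have "b \<in> C b - Z" using noncentral mem_centralizer_self by auto
    then have "card (C b - Z) \<noteq> 0" by (auto simp: card_eq_0_iff)
    then show ?thesis using \<open>a \<notin> C b\<close> noncentral mem_centralizer_self by (simp add: v_def ind_def)
  qed
  ultimately show ?thesis using that ab(1) by blast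
qed

end

section \<open>Spectrum of the commuting Laplacian\<close>

lemma comm_laplacian_carrier:
  "comm_laplacian G f \<in> carrier_mat (card (carrier G)) (card (carrier G))"
  by (simp add: comm_laplacian_def)

context finite_group
begin

lemma comm_adj_iff: "x \<in> carrier G \<Longrightarrow> comm_adj G x y \<longleftrightarrow> y \<in> C x - {x}"
  by (auto simp: comm_adj_def grp_centralizer_def)

lemma comm_laplace_op_cong:
  "x \<in> carrier G \<Longrightarrow> (\<And>y. y \<in> carrier G \<Longrightarrow> v y = w y) \<Longrightarrow> comm_laplace_op G v x = comm_laplace_op G w x"
  unfolding comm_laplace_op_def using centralizer_subset mem_centralizer_self by (auto intro!: sum.cong)

context
  fixes f :: "nat \<Rightarrow> 'a"
  assumes enum: "bij_betw f {..<card (carrier G)} (carrier G)"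
begin

lemma vec_enum_eq_iff:
  "vec (card (carrier G)) (\<lambda>i. v (f i)) = vec (card (carrier G)) (\<lambda>i. w (f i)) \<longleftrightarrow> (\<forall>x\<in>carrier G. v x = w x)"
proof
  assume "vec (card (carrier G)) (\<lambda>i. v (f i)) = vec (card (carrier G)) (\<lambda>i. w (f i))"
  then have "v (f i) = w (f i)" if "i < card (carrier G)" for i
    using that by (metis index_vec)
  then show "\<forall>x\<in>carrier G. v x = w x"
    using enum unfolding bij_betw_def by (metis imageE lessThan_iff)
next
  assume "\<forall>x\<in>carrier G. v x = w x"
  then show "vec (card (carrier G)) (\<lambda>i. v (f i)) = vec (card (carrier G)) (\<lambda>i. w (f i))"
    by (intro eq_vecI) (use enum in \<open>auto simp: bij_betw_def\<close>)
qed

lemma vec_enum_cases: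
  assumes "u \<in> carrier_vec (card (carrier G))"
  obtains v where "u = vec (card (carrier G)) (\<lambda>i. v (f i))"
proof
  show "u = vec (card (carrier G)) (\<lambda>i. u $ the_inv_into {..<card (carrier G)} f (f i))"
    using assms enum by (auto simp: bij_betw_def the_inv_into_f_f)
qed

lemma comm_laplacian_mult_vec:
  "comm_laplacian G f *\<^sub>v vec (card (carrier G)) (\<lambda>i. v (f i))
    = vec (card (carrier G)) (\<lambda>i. comm_laplace_op G v (f i))"
proof (rule eq_vecI)
  fix i assume "i < dim_vec (vec (card (carrier G)) (\<lambda>i. comm_laplace_op G v (f i)))"
  then have i: "i < card (carrier G)" by simp
  define x where "x = f i"
  have x: "x \<in> carrier G" using enum i by (auto simp: bij_betw_def x_def)
  have adj: "{y. comm_adj G x y} = C x - {x}" using comm_adj_iff[OF x] by auto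
  have f_eq: "f j = x \<longleftrightarrow> j = i" if "j < card (carrier G)" for j
    using enum i that by (auto simp: bij_betw_def x_def inj_on_def)
  have "(comm_laplacian G f *\<^sub>v vec (card (carrier G)) (\<lambda>i. v (f i))) $ i
      = (\<Sum>j<card (carrier G). ((if f j = x then real (card (C x - {x})) else 0)
          - of_bool (comm_adj G x (f j))) * v (f j))"
    using i f_eq adj
    by (auto simp: comm_laplacian_def scalar_prod_def atLeast0LessThan x_def intro!: sum.cong)
  also have "\<dots> = (\<Sum>y\<in>carrier G. ((if y = x then real (card (C x - {x})) else 0) - of_bool (comm_adj G x y)) * v y)"
    by (rule sum.reindex_bij_betw[OF enum])
  also have "\<dots> = (\<Sum>y\<in>carrier G. if y = x then real (card (C x - {x})) * v y else 0)
      - (\<Sum>y\<in>carrier G. if y \<in> C x - {x} then v y else 0)"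
    unfolding sum_subtractf[symmetric] by (intro sum.cong) (auto simp: comm_adj_iff[OF x])
  also have "\<dots> = real (card (C x - {x})) * v x - (\<Sum>y\<in>C x - {x}. v y)"
  proof -
    have "carrier G \<inter> (C x - {x}) = C x - {x}" using centralizer_subset by auto
    then show ?thesis using x sum.inter_restrict[OF finite_carrier, of v "C x - {x}"] by (simp add: finite_carrier)
  qed
  also have "\<dots> = comm_laplace_op G v x"
  proof -
    have "x \<in> C x" using x by (rule mem_centralizer_self)
    moreover from this have "1 \<le> card (C x)" by (metis One_nat_def Suc_leI card_gt_0_iff empty_iff finite_centralizer)
    ultimately show ?thesis
      by (simp add: comm_laplace_op_def sum_diff1 card_Diff_singleton of_nat_diff algebra_simps)
  qed
  finally show "(comm_laplacian G f *\<^sub>v vec (card (carrier G)) (\<lambda>i. v (f i))) $ i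
      = vec (card (carrier G)) (\<lambda>i. comm_laplace_op G v (f i)) $ i"
    using i by (simp add: x_def)
qed (simp add: comm_laplacian_def)

end

end

context con_group
begin

context
  fixes f :: "nat \<Rightarrow> 'a"
  assumes enum: "bij_betw f {..<card (carrier G)} (carrier G)"
begin

lemma eigenvalue_comm_laplacian_cases:
  assumes "eigenvalue (comm_laplacian G f) \<mu>"
  shows "\<mu> = 0 \<or> real (card Z) \<le> \<mu>"
proof (rule ccontr)
  assume "\<not> ?thesis"
  then have "\<mu> \<noteq> 0" and below: "\<mu> < real (card Z)" by auto
  obtain u where u: "u \<in> carrier_vec (card (carrier G))" "u \<noteq> 0\<^sub>v (card (carrier G))"
    "comm_laplacian G f *\<^sub>v u = \<mu> \<cdot>\<^sub>v u"
    using assms comm_laplacian_carrier unfolding eigenvalue_def eigenvector_def by (metis carrier_matD(1))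
  obtain v where v: "u = vec (card (carrier G)) (\<lambda>i. v (f i))"
    using vec_enum_cases[OF enum u(1)] .
  have "vec (card (carrier G)) (\<lambda>i. comm_laplace_op G v (f i)) = vec (card (carrier G)) (\<lambda>i. \<mu> * v (f i))"
    using u(3) unfolding v comm_laplacian_mult_vec[OF enum] smult_vec_vec .
  then have "\<forall>x\<in>carrier G. comm_laplace_op G v x = \<mu> * v x"
    using vec_enum_eq_iff[OF enum, of "comm_laplace_op G v" "\<lambda>x. \<mu> * v x"] by simp
  then obtain c where c: "\<forall>x\<in>carrier G. v x = c"
    using eigenfunction_below_center_constant[of v \<mu>] below by blast
  have "\<mu> * c = 0"
    using \<open>\<forall>x\<in>carrier G. comm_laplace_op G v x = \<mu> * v x\<close> comm_laplace_op_cong[of \<one> v "\<lambda>_. c"] c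
    by simp
  moreover have "c \<noteq> 0"
  proof
    assume "c = 0"
    then have "u = vec (card (carrier G)) (\<lambda>i. (\<lambda>_. 0) (f i))"
      unfolding v using vec_enum_eq_iff[OF enum, of v "\<lambda>_. 0"] c by simp
    then show False using u(2) by (simp add: zero_vec_def)
  qed
  ultimately show False using \<open>\<mu> \<noteq> 0\<close> by simp
qed

lemma eigenvalue_comm_laplacian_card_center:
  assumes "\<not> comm_group G"
  shows "eigenvalue (comm_laplacian G f) (real (card Z))"
proof -
  obtain v a where v: "\<And>x. x \<in> carrier G \<Longrightarrow> comm_laplace_op G v x = real (card Z) * v x"
    and a: "a \<in> carrier G" "v a \<noteq> 0"
    using center_eigenfunction_exists[OF assms] by blast
  define u where "u = vec (card (carrier G)) (\<lambda>i. v (f i))"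
  have "comm_laplacian G f *\<^sub>v u = vec (card (carrier G)) (\<lambda>i. real (card Z) * v (f i))"
    unfolding u_def comm_laplacian_mult_vec[OF enum]
    using vec_enum_eq_iff[OF enum, of "comm_laplace_op G v" "\<lambda>x. real (card Z) * v x"] v by simp
  then have "comm_laplacian G f *\<^sub>v u = real (card Z) \<cdot>\<^sub>v u"
    by (simp add: u_def smult_vec_vec)
  moreover have "u \<noteq> 0\<^sub>v (card (carrier G))"
  proof
    assume "u = 0\<^sub>v (card (carrier G))"
    then have "\<forall>x\<in>carrier G. v x = 0"
      unfolding u_def zero_vec_def using vec_enum_eq_iff[OF enum, of v "\<lambda>_. 0"] by simp
    then show False using a by simp
  qed
  moreover have "u \<in> carrier_vec (card (carrier G))" by (simp add: u_def)
  ultimately show ?thesis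
    unfolding eigenvalue_def eigenvector_def using comm_laplacian_carrier[of G f] by auto
qed

lemma order_zero_char_poly_comm_laplacian: "order 0 (char_poly (comm_laplacian G f)) = 1"
proof (rule order_zero_char_poly_eq_1[OF comm_laplacian_carrier])
  show "0 < card (carrier G)" using finite_carrier card_gt_0_iff by blast
  show "comm_laplacian G f *\<^sub>v vec (card (carrier G)) (\<lambda>_. 1) = 0\<^sub>v (card (carrier G))"
    using comm_laplacian_mult_vec[OF enum, of "\<lambda>_. 1"] by (simp add: zero_vec_def)
  fix w :: "real vec"
  assume w: "w \<in> carrier_vec (card (carrier G))"
  obtain v where v: "w = vec (card (carrier G)) (\<lambda>i. v (f i))"
    using vec_enum_cases[OF enum w] .
  show "\<exists>c. w = c \<cdot>\<^sub>v vec (card (carrier G)) (\<lambda>_. 1)" if "comm_laplacian G f *\<^sub>v w = 0\<^sub>v (card (carrier G))"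
  proof -
    have "\<forall>x\<in>carrier G. comm_laplace_op G v x = 0 * v x"
      using that vec_enum_eq_iff[OF enum, of "comm_laplace_op G v" "\<lambda>_. 0"]
      unfolding v comm_laplacian_mult_vec[OF enum] zero_vec_def by simp
    then obtain c where "\<forall>x\<in>carrier G. v x = c"
      using eigenfunction_below_center_constant[of v 0] card_center_pos by auto
    then have "w = vec (card (carrier G)) (\<lambda>i. (\<lambda>_. c) (f i))"
      unfolding v using vec_enum_eq_iff[OF enum, of v "\<lambda>_. c"] by simp
    then show ?thesis by (intro exI[of _ c]) (simp add: smult_vec_vec)
  qed
  show "comm_laplacian G f *\<^sub>v w \<noteq> vec (card (carrier G)) (\<lambda>_. 1)"
  proof
    assume "comm_laplacian G f *\<^sub>v w = vec (card (carrier G)) (\<lambda>_. 1)"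
    then have "\<forall>x\<in>carrier G. comm_laplace_op G v x = 1"
      unfolding v comm_laplacian_mult_vec[OF enum]
      using vec_enum_eq_iff[OF enum, of "comm_laplace_op G v" "\<lambda>_. 1"] by simp
    then have "(\<Sum>x\<in>carrier G. comm_laplace_op G v x) = real (card (carrier G))" by simp
    then show False using sum_comm_laplace_op \<open>0 < card (carrier G)\<close> by simp
  qed
qed

end

end

lemma sorted_list_of_multiset_nth_1:
  fixes M :: "'a :: {linorder, zero} multiset"
  assumes zero_simple: "count M 0 = 1" and z: "z \<in># M" "0 < z"
    and gap: "\<And>x. x \<in># M \<Longrightarrow> x = 0 \<or> z \<le> x"
  shows "sorted_list_of_multiset M ! 1 = z"
proof -
  define M' where "M' = M - {#0#}"
  have M: "M = add_mset 0 M'" unfolding M'_def using zero_simple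
    by (metis count_eq_zero_iff insert_DiffM zero_neq_one)
  have M'_ge: "z \<le> x" if x: "x \<in># M'" for x
  proof -
    have "count M' 0 = 0" using zero_simple by (simp add: M'_def)
    then have "x \<noteq> 0" using x by (metis count_eq_zero_iff)
    then show ?thesis using gap[of x] x M by auto
  qed
  have "z \<noteq> 0" using z(2) by auto
  then have "z \<in> set (sorted_list_of_multiset M')" using z M by simp
  then obtain y ys where ys: "sorted_list_of_multiset M' = y # ys"
    by (cases "sorted_list_of_multiset M'") auto
  have "y \<in># M'" using ys by (metis list.set_intros(1) set_sorted_list_of_multiset)
  then have "z \<le> y" by (rule M'_ge)
  moreover have "y \<le> z"
    using \<open>z \<in> set (sorted_list_of_multiset M')\<close> sorted_sorted_list_of_multiset[of M'] ys by auto
  moreover have "sorted_list_of_multiset M = 0 # y # ys"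
    using \<open>z \<le> y\<close> z(2) unfolding M by (simp add: ys less_le_trans less_imp_le)
  ultimately show ?thesis by simp
qed

theorem corollary2p11:
  fixes G :: "('a, 'b) monoid_scheme" and f :: "nat \<Rightarrow> 'a"
  assumes "group G"
    and "finite (carrier G)"
    and "\<not> comm_group G"
    and "con_condition G"
    and "bij_betw f {..<card (carrier G)} (carrier G)"
  shows "algebraic_connectivity (comm_laplacian G f) = real (card (grp_center G))"
proof -
  interpret con_group G
    using assms(1,2,4) by (simp add: con_group_def con_group_axioms_def finite_group_def finite_group_axioms_def)
  let ?L = "comm_laplacian G f"
  have char_poly_nonzero: "char_poly ?L \<noteq> 0"
    using degree_monic_char_poly[OF comm_laplacian_carrier[of G f]] by auto
  have roots: "x \<in># proots (char_poly ?L) \<longleftrightarrow> eigenvalue ?L x" for x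
    using char_poly_nonzero eigenvalue_root_char_poly[OF comm_laplacian_carrier[of G f]] by simp
  show ?thesis
    unfolding algebraic_connectivity_def eigenvalues_sorted_def
  proof (rule sorted_list_of_multiset_nth_1)
    show "count (proots (char_poly ?L)) 0 = 1"
      using char_poly_nonzero order_zero_char_poly_comm_laplacian[OF assms(5)] by simp
    show "real (card Z) \<in># proots (char_poly ?L)"
      using roots eigenvalue_comm_laplacian_card_center[OF assms(5,3)] by simp
    show "0 < real (card Z)" using card_center_pos by simp
    show "x = 0 \<or> real (card Z) \<le> x" if "x \<in># proots (char_poly ?L)" for x
      using that roots eigenvalue_comm_laplacian_cases[OF assms(5)] by blast
  qed
qed

end
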